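(* For $\mathcal O\subseteq\mathbb F$, the family $\mathrm{UP}(\mathcal O)\setminus\mathrm{EX}(\mathcal O)$ is the set of the cores of the minimal elements of $\mathcal O$.
   Context: Fix a type $\sigma$; $\sigma$-structures are finite sets with an $r$-ary relation for each relation symbol of arity $r$, homomorphisms are relation-preserving maps, $\mathbf A\to\mathbf B$ means one exists. $\mathbb F$ is the set of isomorphism classes of $\sigma$-forests (structures whose incidence multigraph — bipartite with parts the vertices and the blocks $(R,(x_1,\dots,x_r))$, $(x_1,\dots,x_r)\in R(\mathbf A)$, an edge from $x_i$ to the block for each $i$ — has no cycles or parallel edges). The core of $\mathbf A$ is a homomorphically equivalent structure with the minimum number of vertices (unique up to isomorphism). $\mathbf A$ is minimal in $\mathcal O$ if $\mathbf A\in\mathcal O$ and for all $\mathbf C\in\mathcal O$ with $\mathbf C\to\mathbf A$ we have $\mathbf A\to\mathbf C$. A homomorphism $h:\mathbf A\to\mathbf B$ is a retraction if there is a homomorphism $g:\mathbf B\to\mathbf A$ with $h\circ g=\mathrm{id}_{\mathbf B}$, otherwise a non-retraction. $\mathrm{UP}(\mathcal O)=\{\mathbf A\in\mathbb F:\exists\mathbf T\in\mathcal O,\ \mathbf T\to\mathbf A\}$ and $\mathrm{EX}(\mathcal O)=\{\mathbf A\in\mathbb F:\exists\mathbf T\in\mathcal O$ and a non-retraction $h:\mathbf T\to\mathbf A\}$. *)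

theory Defs
  imports Main
begin

text \<open>Signature: relation symbols are the elements of a finite type 'r, with arity ar.
A sigma-structure on vertex type 'a: a universe and, for every symbol R, a set of tuples (lists).\<close>

record ('a, 'r) struc =
  univ :: "'a set"
  rels :: "'r \<Rightarrow> 'a list set"

definition wf_struc :: "('r \<Rightarrow> nat) \<Rightarrow> ('a, 'r) struc \<Rightarrow> bool" where
  "wf_struc ar A \<longleftrightarrow> finite (univ A) \<and>
     (\<forall>R. \<forall>t \<in> rels A R. length t = ar R \<and> set t \<subseteq> univ A)"

definition is_hom :: "('a, 'r) struc \<Rightarrow> ('a, 'r) struc \<Rightarrow> ('a \<Rightarrow> 'a) \<Rightarrow> bool" where
  "is_hom A B h \<longleftrightarrow> (\<forall>x \<in> univ A. h x \<in> univ B) \<and>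
     (\<forall>R. \<forall>t \<in> rels A R. map h t \<in> rels B R)"

definition hom_to :: "('a, 'r) struc \<Rightarrow> ('a, 'r) struc \<Rightarrow> bool" where
  "hom_to A B \<longleftrightarrow> (\<exists>h. is_hom A B h)"

definition hom_equiv :: "('a, 'r) struc \<Rightarrow> ('a, 'r) struc \<Rightarrow> bool" where
  "hom_equiv A B \<longleftrightarrow> hom_to A B \<and> hom_to B A"

definition is_retraction :: "('a, 'r) struc \<Rightarrow> ('a, 'r) struc \<Rightarrow> ('a \<Rightarrow> 'a) \<Rightarrow> bool" where
  "is_retraction A B h \<longleftrightarrow> is_hom A B h \<and> (\<exists>g. is_hom B A g \<and> (\<forall>x \<in> univ B. h (g x) = x))"

text \<open>Incidence graph: vertices Inl x (elements) and Inr (R,t) (blocks); x adjacent to block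
(R,t) iff x occurs in t. Parallel edges arise exactly when a tuple has a repeated entry.\<close>
definition inc_adj :: "('a, 'r) struc \<Rightarrow> ('a + ('r \<times> 'a list)) \<Rightarrow> ('a + ('r \<times> 'a list)) \<Rightarrow> bool" where
  "inc_adj A u v \<longleftrightarrow> (\<exists>x R t. t \<in> rels A R \<and> x \<in> set t \<and>
      ((u = Inl x \<and> v = Inr (R, t)) \<or> (u = Inr (R, t) \<and> v = Inl x)))"

definition inc_has_cycle :: "('a, 'r) struc \<Rightarrow> bool" where
  "inc_has_cycle A \<longleftrightarrow> (\<exists>cs. length cs \<ge> 3 \<and> distinct cs \<and>
      (\<forall>i < length cs. inc_adj A (cs ! i) (cs ! ((i + 1) mod length cs))))"

definition is_forest :: "('r \<Rightarrow> nat) \<Rightarrow> ('a, 'r) struc \<Rightarrow> bool" where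
  "is_forest ar A \<longleftrightarrow> wf_struc ar A \<and> (\<forall>R. \<forall>t \<in> rels A R. distinct t) \<and> \<not> inc_has_cycle A"

definition is_core_of :: "('r \<Rightarrow> nat) \<Rightarrow> ('a, 'r) struc \<Rightarrow> ('a, 'r) struc \<Rightarrow> bool" where
  "is_core_of ar B A \<longleftrightarrow> wf_struc ar B \<and> hom_equiv B A \<and>
     (\<forall>C. wf_struc ar C \<and> hom_equiv C A \<longrightarrow> card (univ B) \<le> card (univ C))"

definition minimal_in :: "('a, 'r) struc set \<Rightarrow> ('a, 'r) struc \<Rightarrow> bool" where
  "minimal_in Obs A \<longleftrightarrow> A \<in> Obs \<and> (\<forall>C \<in> Obs. hom_to C A \<longrightarrow> hom_to A C)"

definition UPC :: "('r \<Rightarrow> nat) \<Rightarrow> ('a, 'r) struc set \<Rightarrow> ('a, 'r) struc set" where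
  "UPC ar Obs = {A. is_forest ar A \<and> (\<exists>T \<in> Obs. hom_to T A)}"

definition EXC :: "('r \<Rightarrow> nat) \<Rightarrow> ('a, 'r) struc set \<Rightarrow> ('a, 'r) struc set" where
  "EXC ar Obs = {A. is_forest ar A \<and> (\<exists>T \<in> Obs. \<exists>h. is_hom T A h \<and> \<not> is_retraction T A h)}"

end

theory Submission
  imports Defs
begin

text \<open>If every homomorphism from an obstruction T into B is a retraction, then B maps back
into T and every endomorphism of B is onto, which forces B to be a core of T, and T to be
minimal. Conversely, every endomorphism of a core is injective, hence (by finiteness) an
automorphism; so any h : T \<rightarrow> B with B \<rightarrow> T has a right inverse, namely
B \<rightarrow> T followed by the inverse of the resulting endomorphism of B. A core of a
forest embeds into it, so it is a forest itself.\<close>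

lemma is_hom_comp:
  assumes "is_hom A B f" and "is_hom B C g"
  shows "is_hom A C (g \<circ> f)"
  using assms unfolding is_hom_def by (metis comp_apply map_map)

lemma hom_to_trans: "hom_to A B \<Longrightarrow> hom_to B C \<Longrightarrow> hom_to A C"
  unfolding hom_to_def using is_hom_comp by blast

lemma finite_rels: "wf_struc ar B \<Longrightarrow> finite (rels B R)"
  unfolding wf_struc_def
  by (rule finite_subset[of _ "{xs. set xs \<subseteq> univ B \<and> length xs = ar R}"])
     (auto intro: finite_lists_length_eq)

lemma is_retraction_image:
  assumes "is_retraction T B h"
  shows "h ` univ T = univ B"
proof
  show "h ` univ T \<subseteq> univ B" using assms unfolding is_retraction_def is_hom_def by blast
  obtain g where "is_hom B T g" "\<forall>x \<in> univ B. h (g x) = x"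
    using assms unfolding is_retraction_def by blast
  then show "univ B \<subseteq> h ` univ T" unfolding is_hom_def by (metis image_eqI subsetI)
qed

lemma is_core_ofI:
  assumes wf: "wf_struc ar B" and equiv: "hom_equiv B A"
    and onto: "\<And>e. is_hom B B e \<Longrightarrow> univ B \<subseteq> e ` univ B"
  shows "is_core_of ar B A"
  unfolding is_core_of_def
proof (intro conjI allI impI wf equiv)
  fix C assume C: "wf_struc ar C \<and> hom_equiv C A"
  then obtain p q where p: "is_hom B C p" and q: "is_hom C B q"
    using equiv hom_to_trans unfolding hom_equiv_def hom_to_def by meson
  have finite: "finite (univ B)" "finite (univ C)" using wf C unfolding wf_struc_def by blast+
  have "card (univ B) \<le> card (q ` p ` univ B)"
    using onto[OF is_hom_comp[OF p q]] finite by (simp add: card_mono image_comp)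
  also have "\<dots> \<le> card (p ` univ B)" using finite by (simp add: card_image_le)
  also have "\<dots> \<le> card (univ C)" using p finite unfolding is_hom_def by (auto intro: card_mono)
  finally show "card (univ B) \<le> card (univ C)" .
qed

lemma is_core_of_if_all_retractions:
  assumes wf: "wf_struc ar B" and h: "is_hom T B h"
    and retractions: "\<And>f. is_hom T B f \<Longrightarrow> is_retraction T B f"
  shows "is_core_of ar B T"
proof (rule is_core_ofI[OF wf])
  show "hom_equiv B T"
    using h retractions[OF h] unfolding hom_equiv_def hom_to_def is_retraction_def by blast
  fix e assume e: "is_hom B B e"
  have "univ B = (e \<circ> h) ` univ T"
    using retractions[OF is_hom_comp[OF h e]] is_retraction_image by blast
  also have "\<dots> \<subseteq> e ` univ B" using h unfolding is_hom_def by auto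
  finally show "univ B \<subseteq> e ` univ B" by simp
qed

lemma minimal_in_if_all_retractions:
  assumes T: "T \<in> Obs" "is_hom T B h"
    and retractions: "\<And>C f. C \<in> Obs \<Longrightarrow> is_hom C B f \<Longrightarrow> is_retraction C B f"
  shows "minimal_in Obs T"
  unfolding minimal_in_def
proof (intro conjI ballI impI T(1))
  fix C assume C: "C \<in> Obs" "hom_to C T"
  then obtain f where "is_hom C B (h \<circ> f)" using is_hom_comp T(2) unfolding hom_to_def by blast
  then have "hom_to B C" using retractions C(1) unfolding is_retraction_def hom_to_def by blast
  then show "hom_to T C" using T(2) hom_to_trans unfolding hom_to_def by blast
qed

text \<open>The image of a non-injective endomorphism would be a smaller equivalent structure.\<close>
lemma core_endo_inj:
  assumes core: "is_core_of ar B A" and e: "is_hom B B e"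
  shows "inj_on e (univ B)"
proof -
  define C where "C = \<lparr>univ = e ` univ B, rels = (\<lambda>R. map e ` rels B R)\<rparr>"
  have wfB: "wf_struc ar B" using core unfolding is_core_of_def by blast
  then have finite: "finite (univ B)" unfolding wf_struc_def by blast
  have wfC: "wf_struc ar C" using wfB e unfolding C_def wf_struc_def is_hom_def by auto
  have "is_hom B C e" "is_hom C B id" using e unfolding C_def is_hom_def by auto
  then have "hom_equiv C A"
    using core hom_to_trans unfolding is_core_of_def hom_equiv_def hom_to_def by meson
  then have "card (univ B) \<le> card (e ` univ B)"
    using core wfC unfolding is_core_of_def C_def by auto
  then show ?thesis using finite card_image_le[OF finite, of e] by (simp add: inj_on_iff_eq_card)
qed

text \<open>An injective endomorphism of a finite structure permutes both the universe and each
relation, so its inverse is again an endomorphism.\<close>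
lemma inj_endo_right_inverse:
  assumes wf: "wf_struc ar B" and e: "is_hom B B e" and inj: "inj_on e (univ B)"
  shows "\<exists>g. is_hom B B g \<and> (\<forall>x \<in> univ B. e (g x) = x)"
proof -
  define g where "g = inv_into (univ B) e"
  have "e ` univ B = univ B"
    using wf e inj by (intro endo_inj_surj) (auto simp: wf_struc_def is_hom_def)
  then have g: "g x \<in> univ B" "e (g x) = x" if "x \<in> univ B" for x
    using that inv_into_into f_inv_into_f unfolding g_def by metis+
  have "map g t \<in> rels B R" if t: "t \<in> rels B R" for R t
  proof -
    have tuples: "set s \<subseteq> univ B" if "s \<in> rels B R" for s
      using wf that unfolding wf_struc_def by blast
    have "inj_on (map e) (rels B R)"
      using inj tuples by (intro inj_onI) (metis inj_on_map_eq_map inj_on_subset le_sup_iff)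
    moreover have "map e ` rels B R \<subseteq> rels B R" using e unfolding is_hom_def by blast
    ultimately have "map e ` rels B R = rels B R" by (intro endo_inj_surj finite_rels[OF wf])
    then obtain s where s: "s \<in> rels B R" "t = map e s" using t by (metis imageE)
    have "map g t = s"
      unfolding s(2) map_map g_def using tuples[OF s(1)] inj by (intro map_idI) auto
    then show ?thesis using s by simp
  qed
  then have "is_hom B B g" using g unfolding is_hom_def by blast
  then show ?thesis using g by blast
qed

lemma retraction_onto_core:
  assumes core: "is_core_of ar B A" and p: "is_hom B T p" and h: "is_hom T B h"
  shows "is_retraction T B h"
proof -
  have wf: "wf_struc ar B" using core unfolding is_core_of_def by blast
  have endo: "is_hom B B (h \<circ> p)" using is_hom_comp[OF p h] .
  obtain g where "is_hom B B g" "\<forall>x \<in> univ B. h (p (g x)) = x"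
    using inj_endo_right_inverse[OF wf endo core_endo_inj[OF core endo]] by auto
  then show ?thesis using h is_hom_comp[of B B g T p] p unfolding is_retraction_def by auto
qed

lemma inc_adj_map:
  assumes k: "is_hom B A k" and "inc_adj B u v"
  shows "inc_adj A (map_sum k (\<lambda>(R, t). (R, map k t)) u)
                   (map_sum k (\<lambda>(R, t). (R, map k t)) v)"
proof -
  obtain x R t where t: "t \<in> rels B R" "x \<in> set t"
    "(u = Inl x \<and> v = Inr (R, t)) \<or> (u = Inr (R, t) \<and> v = Inl x)"
    using assms(2) unfolding inc_adj_def by blast
  have "map k t \<in> rels A R" using t k unfolding is_hom_def by blast
  then show ?thesis using t unfolding inc_adj_def by auto
qed

text \<open>On the vertices of the incidence graph (elements and blocks) the induced map is
injective: blocks are determined by their tuples, and k is injective on their entries.\<close>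
lemma inc_has_cycle_inj_hom:
  fixes A B :: "('a, 'r) struc"
  assumes wfB: "wf_struc ar B" and k: "is_hom B A k" and inj: "inj_on k (univ B)"
    and cycle: "inc_has_cycle B"
  shows "inc_has_cycle A"
proof -
  define \<phi> :: "'a + 'r \<times> 'a list \<Rightarrow> _" where "\<phi> = map_sum k (\<lambda>(R, t). (R, map k t))"
  define V where "V = Inl ` univ B \<union> {Inr (R, t) | R t. t \<in> rels B R}"
  obtain cs where cs: "length cs \<ge> 3" "distinct cs"
    "\<forall>i < length cs. inc_adj B (cs ! i) (cs ! ((i + 1) mod length cs))"
    using cycle unfolding inc_has_cycle_def by blast
  have "set cs \<subseteq> V"
  proof
    fix u assume "u \<in> set cs"
    then obtain i where "i < length cs" "u = cs ! i" by (metis in_set_conv_nth)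
    then show "u \<in> V" using cs(3) wfB unfolding inc_adj_def V_def wf_struc_def by blast
  qed
  moreover have "inj_on \<phi> V"
  proof (rule inj_onI)
    fix u v assume "u \<in> V" "v \<in> V" "\<phi> u = \<phi> v"
    moreover have "t = t'" if "t \<in> rels B R" "t' \<in> rels B R'" "map k t = map k t'" for R R' t t'
      using that wfB inj_on_subset[OF inj] inj_on_map_eq_map
      unfolding wf_struc_def by (metis le_sup_iff)
    ultimately show "u = v" using inj unfolding V_def \<phi>_def by (auto dest: inj_onD)
  qed
  ultimately have "distinct (map \<phi> cs)" using cs(2) by (simp add: distinct_map inj_on_subset)
  moreover have "inc_adj A (map \<phi> cs ! i) (map \<phi> cs ! ((i + 1) mod length (map \<phi> cs)))"
    if i: "i < length (map \<phi> cs)" for i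
  proof -
    have "(i + 1) mod length cs < length cs" using cs(1) by (intro mod_less_divisor) linarith
    moreover have "inc_adj B (cs ! i) (cs ! ((i + 1) mod length cs))" using cs(3) i by simp
    ultimately show ?thesis using i inc_adj_map[OF k] unfolding \<phi>_def by simp
  qed
  ultimately show ?thesis using cs(1) unfolding inc_has_cycle_def
    by (intro exI[of _ "map \<phi> cs"]) simp
qed

lemma is_forest_inj_hom:
  assumes A: "is_forest ar A" and wfB: "wf_struc ar B" and k: "is_hom B A k"
    and inj: "inj_on k (univ B)"
  shows "is_forest ar B"
proof -
  have "distinct t" if "t \<in> rels B R" for R t
    using that k A unfolding is_hom_def is_forest_def by (metis distinct_map)
  then show ?thesis
    using A wfB inc_has_cycle_inj_hom[OF wfB k inj] unfolding is_forest_def by blast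
qed

lemma core_of_forest:
  assumes A: "is_forest ar A" and core: "is_core_of ar B A"
  shows "is_forest ar B"
proof -
  obtain k f where k: "is_hom B A k" and f: "is_hom A B f"
    using core unfolding is_core_of_def hom_equiv_def hom_to_def by blast
  have "inj_on (f \<circ> k) (univ B)" using core_endo_inj[OF core is_hom_comp[OF k f]] .
  then show ?thesis
    using is_forest_inj_hom[OF A _ k] core inj_on_imageI2 unfolding is_core_of_def by blast
qed

theorem proposition6p2:
  fixes ar :: "'r::finite \<Rightarrow> nat" and Obs :: "('a, 'r) struc set"
  assumes "Obs \<subseteq> {A. is_forest ar A}"
  shows "UPC ar Obs - EXC ar Obs = {B. \<exists>A. minimal_in Obs A \<and> is_core_of ar B A}"
proof (intro equalityI subsetI)
  fix B assume B: "B \<in> UPC ar Obs - EXC ar Obs"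
  then obtain T h where T: "T \<in> Obs" "is_hom T B h" and wf: "wf_struc ar B"
    unfolding UPC_def hom_to_def is_forest_def by blast
  have "\<And>C f. C \<in> Obs \<Longrightarrow> is_hom C B f \<Longrightarrow> is_retraction C B f"
    using B unfolding UPC_def EXC_def by blast
  then show "B \<in> {B. \<exists>A. minimal_in Obs A \<and> is_core_of ar B A}"
    using minimal_in_if_all_retractions[OF T] is_core_of_if_all_retractions[OF wf T(2)] T(1)
    by blast
next
  fix B assume "B \<in> {B. \<exists>A. minimal_in Obs A \<and> is_core_of ar B A}"
  then obtain A where min: "minimal_in Obs A" and core: "is_core_of ar B A" by blast
  then have forest: "is_forest ar B" using assms core_of_forest unfolding minimal_in_def by blast
  obtain k f where k: "is_hom B A k" and f: "is_hom A B f"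
    using core unfolding is_core_of_def hom_equiv_def hom_to_def by blast
  have "is_retraction T B h" if T: "T \<in> Obs" "is_hom T B h" for T h
  proof -
    obtain r where "is_hom A T r"
      using min T is_hom_comp[OF T(2) k] unfolding minimal_in_def hom_to_def by blast
    then show ?thesis using retraction_onto_core[OF core is_hom_comp[OF k] T(2)] by blast
  qed
  then show "B \<in> UPC ar Obs - EXC ar Obs"
    using forest min f unfolding UPC_def EXC_def minimal_in_def hom_to_def by blast
qed

end
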